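(* Let $\mathfrak{P}$ be a nonempty compact set of probability distributions $P=(p_\omega)_{\omega\in\Omega}$ on $\Omega$ and $\Phi_R(\mathbf{x})=\min_{P\in\mathfrak{P}}\sum_{\omega\in\Omega}p_\omega Q_\omega(\mathbf{x})$. Let $\hat{\mathbf{x}}\in\mathcal{X}$ and for each $\omega\in\Omega$ let $\hat{\mathbf{S}}^\omega$ be an optimal solution of the problem defining $Q_\omega(\hat{\mathbf{x}})$; set $\hat y^\omega_{q,i}=1$ if $i\in\hat S^\omega_q$ and $\hat y^\omega_{q,i}=0$ otherwise. Then for every $\mathbf{x}\in\mathcal{X}$, $$\Phi_R(\mathbf{x})\;\ge\;\Phi_R(\hat{\mathbf{x}})-\sum_{q=1}^k\sum_{i\in N}\Big(\max_{P\in\mathfrak{P}}\sum_{\omega\in\Omega}p_\omega\,\rho^\omega_{q,i}(\boldsymbol{\emptyset})\,\hat y^\omega_{q,i}\,\xi^\omega_i\Big)x_{q,i}.$$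
   Context: Let $n,k$ be positive integers and $N=\{1,\dots,n\}$. $\mathbb{X}(N,k)$ denotes the set of $k$-tuples $\mathbf{S}=(S_1,\dots,S_k)$ of pairwise disjoint subsets of $N$; such a tuple is identified with $\mathbf{s}\in\{0,1\}^{kn}$ where $s_{q,i}=1$ iff $i\in S_q$. For $\mathbf{X},\mathbf{Y}\in\mathbb{X}(N,k)$ let $\mathbf{X}\sqcap\mathbf{Y}=(X_1\cap Y_1,\dots,X_k\cap Y_k)$ and $\mathbf{X}\sqcup\mathbf{Y}$ be the tuple whose $i$-th component is $(X_i\cup Y_i)\setminus\bigcup_{q\ne i}(X_q\cup Y_q)$. A function $f:\mathbb{X}(N,k)\to\mathbb{R}$ is $k$-submodular if $f(\mathbf{X})+f(\mathbf{Y})\ge f(\mathbf{X}\sqcap\mathbf{Y})+f(\mathbf{X}\sqcup\mathbf{Y})$ for all $\mathbf{X},\mathbf{Y}$, and monotone if $f(\mathbf{X})\le f(\mathbf{Y})$ whenever $X_q\subseteq Y_q$ for all $q$. $\boldsymbol{\emptyset}=(\emptyset,\dots,\emptyset)$. Given nonnegative integer budgets $A_1,\dots,A_k$ and $D_1,\dots,D_k$, the attacker's feasible set is $\mathcal{X}=\{\mathbf{x}\in\{0,1\}^{kn}:\sum_{i=1}^n x_{q,i}\le A_q\ \forall q,\ \sum_{q=1}^k x_{q,i}\le 1\ \forall i\in N\}$. Stochastic setting: $\Omega$ is a finite set of scenarios; for each $\omega\in\Omega$ we are given $\xi^\omega\in\{0,1\}^n$ and a monotone $k$-submodular function $f^\omega:\mathbb{X}(N,k)\to\mathbb{R}$,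 with marginal gains $\rho^\omega_{q,i}(\mathbf{X})=f^\omega(X_1,\dots,X_q\cup\{i\},\dots,X_k)-f^\omega(\mathbf{X})$ for $i\notin\bigcup_r X_r$. For $\mathbf{x}\in\mathcal{X}$, $Q_\omega(\mathbf{x})=\max\{f^\omega(\mathbf{S}):\mathbf{S}\in\mathbb{X}(N,k),\ s_{q,i}\le 1-x_{q,i}\xi^\omega_i\ \forall q,i,\ \sum_{i=1}^n s_{q,i}\le D_q\ \forall q\}$. *)

theory Defs
  imports "HOL-Analysis.Analysis"
begin

text \<open>A k-tuple of subsets of N = {1..n} is a function S :: nat => nat set, where
  S q is the q-th component for q in {1..k}, and S q = {} for q outside {1..k}.\<close>

type_synonym ktuple = "nat \<Rightarrow> nat set"

definition ktuples :: "nat \<Rightarrow> nat \<Rightarrow> ktuple set" where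
  "ktuples n k = {S. (\<forall>q. q \<notin> {1..k} \<longrightarrow> S q = {}) \<and>
                     (\<forall>q\<in>{1..k}. S q \<subseteq> {1..n}) \<and>
                     (\<forall>q\<in>{1..k}. \<forall>r\<in>{1..k}. q \<noteq> r \<longrightarrow> S q \<inter> S r = {})}"

definition kempty :: ktuple where
  "kempty = (\<lambda>q. {})"

definition kmeet :: "ktuple \<Rightarrow> ktuple \<Rightarrow> ktuple" where
  "kmeet X Y = (\<lambda>q. X q \<inter> Y q)"

definition kjoin :: "nat \<Rightarrow> ktuple \<Rightarrow> ktuple \<Rightarrow> ktuple" where
  "kjoin k X Y = (\<lambda>q. (X q \<union> Y q) - (\<Union>r\<in>{1..k} - {q}. X r \<union> Y r))"

definition k_submodular :: "nat \<Rightarrow> nat \<Rightarrow> (ktuple \<Rightarrow> real) \<Rightarrow> bool" where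
  "k_submodular n k f \<longleftrightarrow> (\<forall>X\<in>ktuples n k. \<forall>Y\<in>ktuples n k.
      f X + f Y \<ge> f (kmeet X Y) + f (kjoin k X Y))"

definition k_monotone :: "nat \<Rightarrow> nat \<Rightarrow> (ktuple \<Rightarrow> real) \<Rightarrow> bool" where
  "k_monotone n k f \<longleftrightarrow> (\<forall>X\<in>ktuples n k. \<forall>Y\<in>ktuples n k.
      (\<forall>q\<in>{1..k}. X q \<subseteq> Y q) \<longrightarrow> f X \<le> f Y)"

definition marginal :: "(ktuple \<Rightarrow> real) \<Rightarrow> nat \<Rightarrow> nat \<Rightarrow> ktuple \<Rightarrow> real" where
  "marginal f q i X = f (X(q := insert i (X q))) - f X"

definition attacker_feasible :: "nat \<Rightarrow> nat \<Rightarrow> (nat \<Rightarrow> nat) \<Rightarrow> (nat \<Rightarrow> nat \<Rightarrow> real) \<Rightarrow> bool" where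
  "attacker_feasible n k A x \<longleftrightarrow>
     (\<forall>q\<in>{1..k}. \<forall>i\<in>{1..n}. x q i \<in> {0, 1}) \<and>
     (\<forall>q\<in>{1..k}. (\<Sum>i\<in>{1..n}. x q i) \<le> real (A q)) \<and>
     (\<forall>i\<in>{1..n}. (\<Sum>q\<in>{1..k}. x q i) \<le> 1)"

definition defender_feasible :: "nat \<Rightarrow> nat \<Rightarrow> (nat \<Rightarrow> nat) \<Rightarrow> (nat \<Rightarrow> real)
      \<Rightarrow> (nat \<Rightarrow> nat \<Rightarrow> real) \<Rightarrow> ktuple set" where
  "defender_feasible n k D xi x = {S \<in> ktuples n k.
      (\<forall>q\<in>{1..k}. \<forall>i\<in>{1..n}. (if i \<in> S q then 1 else 0) \<le> 1 - x q i * xi i) \<and>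
      (\<forall>q\<in>{1..k}. card (S q) \<le> D q)}"

definition Qval :: "nat \<Rightarrow> nat \<Rightarrow> (nat \<Rightarrow> nat) \<Rightarrow> (nat \<Rightarrow> real) \<Rightarrow> (ktuple \<Rightarrow> real)
      \<Rightarrow> (nat \<Rightarrow> nat \<Rightarrow> real) \<Rightarrow> real" where
  "Qval n k D xi f x = Max (f ` defender_feasible n k D xi x)"

definition prob_dist :: "real ^ 'w::finite \<Rightarrow> bool" where
  "prob_dist P \<longleftrightarrow> (\<forall>w. P $ w \<ge> 0) \<and> (\<Sum>w\<in>UNIV. P $ w) = 1"

text \<open>Robust value Phi_R(x) = min over P of the expected recourse value;
  the minimum exists since the ambiguity set is compact and nonempty.\<close>
definition PhiR :: "(real ^ 'w::finite) set \<Rightarrow> nat \<Rightarrow> nat \<Rightarrow> (nat \<Rightarrow> nat)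
      \<Rightarrow> ('w \<Rightarrow> nat \<Rightarrow> real) \<Rightarrow> ('w \<Rightarrow> ktuple \<Rightarrow> real) \<Rightarrow> (nat \<Rightarrow> nat \<Rightarrow> real) \<Rightarrow> real" where
  "PhiR \<PP> n k D xi f x = (INF P\<in>\<PP>. \<Sum>w\<in>UNIV. P $ w * Qval n k D (xi w) (f w) x)"

end

theory Submission
  imports Defs
begin

text \<open>Fix a scenario \<omega> and the optimal defence Shat \<omega> against xhat. Against x, deleting from
  Shat \<omega> the elements that x interdicts in scenario \<omega> leaves a feasible defence, and by
  k-submodularity (diminishing returns) putting them back one at a time raises f \<omega> by at most
  the marginal gain \<rho>(\<omega>,q,i) at the empty tuple for each. Hence Q(\<omega>,x) \<ge> Q(\<omega>,xhat) minus the
  sum of \<rho>(\<omega>,q,i) yhat(\<omega>,q,i) \<xi>(\<omega>,i) x(q,i), and averaging under any P in the ambiguity set,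
  then bounding each coefficient by its maximum over the set, gives the claim.\<close>

lemma finite_ktuples: "finite (ktuples n k)"
proof -
  let ?extend = "\<lambda>h q. if q \<in> {1..k} then h q else {}"
  have "ktuples n k \<subseteq> ?extend ` PiE {1..k} (\<lambda>_. Pow {1..n})"
  proof
    fix S assume S: "S \<in> ktuples n k"
    hence "restrict S {1..k} \<in> PiE {1..k} (\<lambda>_. Pow {1..n})" by (auto simp: ktuples_def)
    moreover have "S = ?extend (restrict S {1..k})"
      using S by (force simp: ktuples_def fun_eq_iff)
    ultimately show "S \<in> ?extend ` PiE {1..k} (\<lambda>_. Pow {1..n})" by blast
  qed
  thus ?thesis by (rule finite_subset) (intro finite_imageI finite_PiE; simp)
qed

lemma kjoin_singleton:
  assumes X: "X \<in> ktuples n k" and q: "q \<in> {1..k}" and i: "\<forall>r\<in>{1..k}. i \<notin> X r"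
  shows "kjoin k (kempty(q := {i})) X = X(q := insert i (X q))"
proof (rule ext)
  fix r
  have unique: "a = b" if "a \<in> {1..k}" "b \<in> {1..k}" "j \<in> X a" "j \<in> X b" for a b j
    using X that unfolding ktuples_def by blast
  have outside: "X a = {}" if "a \<notin> {1..k}" for a
    using X that unfolding ktuples_def by blast
  show "kjoin k (kempty(q := {i})) X r = (X(q := insert i (X q))) r"
  proof (cases "r \<in> {1..k}")
    case True
    then show ?thesis
      using q i unique[of r] unique[of q]
      by (auto simp: kjoin_def kempty_def simp del: atLeastAtMost_iff split: if_splits)
  next
    case False
    then show ?thesis using q outside by (auto simp: kjoin_def kempty_def)
  qed
qed

lemma marginal_le_marginal_kempty:
  assumes sub: "k_submodular n k g" and X: "X \<in> ktuples n k" and q: "q \<in> {1..k}"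
    and i: "i \<in> {1..n}" and fresh: "\<forall>r\<in>{1..k}. i \<notin> X r"
  shows "marginal g q i X \<le> marginal g q i kempty"
proof -
  let ?E = "kempty(q := {i})"
  have E: "?E \<in> ktuples n k" using q i by (auto simp: ktuples_def kempty_def)
  have meet: "kmeet ?E X = kempty" using fresh q by (auto simp: kmeet_def kempty_def fun_eq_iff)
  have "g (kmeet ?E X) + g (kjoin k ?E X) \<le> g ?E + g X"
    using sub E X unfolding k_submodular_def by blast
  thus ?thesis
    unfolding marginal_def meet kjoin_singleton[OF X q fresh] by (simp add: kempty_def)
qed

definition kextend :: "ktuple \<Rightarrow> (nat \<times> nat) set \<Rightarrow> ktuple" where
  "kextend X E = (\<lambda>q. X q \<union> {i. (q, i) \<in> E})"

definition admissible_extension :: "nat \<Rightarrow> nat \<Rightarrow> ktuple \<Rightarrow> (nat \<times> nat) set \<Rightarrow> bool" where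
  "admissible_extension n k X E \<longleftrightarrow> E \<subseteq> {1..k} \<times> {1..n} \<and>
     (\<forall>q q' i. (q, i) \<in> E \<longrightarrow> (q', i) \<in> E \<longrightarrow> q = q') \<and>
     (\<forall>q i r. (q, i) \<in> E \<longrightarrow> r \<in> {1..k} \<longrightarrow> i \<notin> X r)"

lemma admissible_extension_subset:
  assumes "admissible_extension n k X E" and "E' \<subseteq> E"
  shows "admissible_extension n k X E'"
  using assms unfolding admissible_extension_def by (meson subsetD subset_trans)

lemma kextend_in_ktuples:
  assumes X: "X \<in> ktuples n k" and E: "admissible_extension n k X E"
  shows "kextend X E \<in> ktuples n k"
proof -
  have E_sub: "E \<subseteq> {1..k} \<times> {1..n}"
    and E_unique: "\<And>q q' i. (q, i) \<in> E \<Longrightarrow> (q', i) \<in> E \<Longrightarrow> q = q'"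
    and E_fresh: "\<And>q i r. (q, i) \<in> E \<Longrightarrow> r \<in> {1..k} \<Longrightarrow> i \<notin> X r"
    using E unfolding admissible_extension_def by blast+
  have X_out: "\<And>q. q \<notin> {1..k} \<Longrightarrow> X q = {}"
    and X_sub: "\<And>q. q \<in> {1..k} \<Longrightarrow> X q \<subseteq> {1..n}"
    and X_disj: "\<And>q r. q \<in> {1..k} \<Longrightarrow> r \<in> {1..k} \<Longrightarrow> q \<noteq> r \<Longrightarrow> X q \<inter> X r = {}"
    using X unfolding ktuples_def by blast+
  show ?thesis
    unfolding ktuples_def kextend_def
  proof (intro CollectI conjI allI ballI impI)
    fix q assume "q \<notin> {1..k}"
    thus "X q \<union> {i. (q, i) \<in> E} = {}" using X_out E_sub by blast
  next
    fix q assume "q \<in> {1..k}"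
    thus "X q \<union> {i. (q, i) \<in> E} \<subseteq> {1..n}" using X_sub E_sub by blast
  next
    fix q r assume "q \<in> {1..k}" "r \<in> {1..k}" "q \<noteq> r"
    thus "(X q \<union> {i. (q, i) \<in> E}) \<inter> (X r \<union> {i. (r, i) \<in> E}) = {}"
      using X_disj[of q r] E_unique[of q _ r] E_fresh[of q _ r] E_fresh[of r _ q] by blast
  qed
qed

lemma k_submodular_kextend_le:
  assumes sub: "k_submodular n k g" and "finite E"
    and X: "X \<in> ktuples n k" and "admissible_extension n k X E"
  shows "g (kextend X E) \<le> g X + (\<Sum>(q, i)\<in>E. marginal g q i kempty)"
  using \<open>finite E\<close> \<open>admissible_extension n k X E\<close>
proof (induction E rule: finite_induct)
  case empty
  then show ?case by (simp add: kextend_def)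
next
  case (insert e E)
  obtain q i where e: "e = (q, i)" by fastforce
  have E: "admissible_extension n k X E"
    using insert.prems by (rule admissible_extension_subset) blast
  have qi: "q \<in> {1..k}" "i \<in> {1..n}"
    using insert.prems e unfolding admissible_extension_def by auto
  have fresh: "\<forall>r\<in>{1..k}. i \<notin> kextend X E r"
  proof
    fix r assume r: "r \<in> {1..k}"
    have "r = q" if "(r, i) \<in> E"
      using insert.prems that e unfolding admissible_extension_def by (meson insertI1 insertI2)
    then have "(r, i) \<notin> E"
      using insert.hyps(2) e by blast
    moreover have "i \<notin> X r"
      using insert.prems e r unfolding admissible_extension_def by (meson insertI1)
    ultimately show "i \<notin> kextend X E r" by (simp add: kextend_def)
  qed
  have "kextend X (insert e E) = (kextend X E)(q := insert i (kextend X E q))"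
    by (auto simp: kextend_def fun_eq_iff e)
  then have "g (kextend X (insert e E)) = g (kextend X E) + marginal g q i (kextend X E)"
    by (simp add: marginal_def)
  also have "\<dots> \<le> g (kextend X E) + marginal g q i kempty"
    using marginal_le_marginal_kempty[OF sub kextend_in_ktuples[OF X E] qi fresh] by simp
  finally show ?case using insert.IH[OF E] insert.hyps e by simp
qed

lemma k_submodular_le_plus_marginals:
  assumes sub: "k_submodular n k g" and X: "X \<in> ktuples n k" and Y: "Y \<in> ktuples n k"
    and XY: "\<forall>q. X q \<subseteq> Y q"
  shows "g Y \<le> g X + (\<Sum>q\<in>{1..k}. \<Sum>i\<in>Y q - X q. marginal g q i kempty)"
proof -
  define E where "E = Sigma {1..k} (\<lambda>q. Y q - X q)"
  have Y_out: "\<And>q. q \<notin> {1..k} \<Longrightarrow> Y q = {}"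
    and Y_sub: "\<And>q. q \<in> {1..k} \<Longrightarrow> Y q \<subseteq> {1..n}"
    and Y_disj: "\<And>q r. q \<in> {1..k} \<Longrightarrow> r \<in> {1..k} \<Longrightarrow> q \<noteq> r \<Longrightarrow> Y q \<inter> Y r = {}"
    using Y unfolding ktuples_def by blast+
  have E_sub: "E \<subseteq> {1..k} \<times> {1..n}" using Y_sub unfolding E_def by blast
  then have finE: "finite E" by (rule finite_subset) simp
  have "admissible_extension n k X E"
    unfolding admissible_extension_def
  proof (intro conjI allI impI E_sub)
    fix q q' i assume "(q, i) \<in> E" "(q', i) \<in> E"
    then show "q = q'" using Y_disj unfolding E_def by blast
  next
    fix q i r assume "(q, i) \<in> E" "r \<in> {1..k}"
    then show "i \<notin> X r" using Y_disj XY unfolding E_def by blast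
  qed
  moreover have "kextend X E = Y"
  proof
    fix q
    show "kextend X E q = Y q"
      using XY Y_out[of q] unfolding kextend_def E_def by (cases "q \<in> {1..k}") auto
  qed
  moreover have "(\<Sum>(q, i)\<in>E. marginal g q i kempty)
      = (\<Sum>q\<in>{1..k}. \<Sum>i\<in>Y q - X q. marginal g q i kempty)"
    unfolding E_def using finite_subset[OF Y_sub] by (subst sum.Sigma) auto
  ultimately show ?thesis using k_submodular_kextend_le[OF sub finE X] by simp
qed

lemma interdicted_removal_feasible:
  assumes S: "S \<in> ktuples n k" and card: "\<forall>q\<in>{1..k}. card (S q) \<le> D q"
    and x01: "\<forall>q\<in>{1..k}. \<forall>i\<in>{1..n}. x q i \<in> {0, 1}" and xi01: "\<forall>i\<in>{1..n}. xi i \<in> {0, 1}"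
  shows "(\<lambda>q. S q - {i. x q i * xi i = 1}) \<in> defender_feasible n k D xi x"
  unfolding defender_feasible_def
proof (intro CollectI conjI ballI)
  show "(\<lambda>q. S q - {i. x q i * xi i = 1}) \<in> ktuples n k"
    using S unfolding ktuples_def by blast
next
  fix q i assume "q \<in> {1..k}" "i \<in> {1..n}"
  then have "x q i \<in> {0, 1}" "xi i \<in> {0, 1}" using x01 xi01 by auto
  then show "(if i \<in> S q - {i. x q i * xi i = 1} then 1 else 0) \<le> 1 - x q i * xi i" by auto
next
  fix q assume q: "q \<in> {1..k}"
  have "S q \<subseteq> {1..n}" using S q unfolding ktuples_def by blast
  then have "finite (S q)" by (rule finite_subset) simp
  then have "card (S q - {i. x q i * xi i = 1}) \<le> card (S q)" by (rule card_mono) blast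
  then show "card (S q - {i. x q i * xi i = 1}) \<le> D q" using card q by force
qed

lemma finite_defender_feasible: "finite (defender_feasible n k D xi x)"
  by (rule finite_subset[OF _ finite_ktuples]) (auto simp: defender_feasible_def)

lemma Qval_ge_minus_interdicted_marginals:
  assumes sub: "k_submodular n k g" and S: "S \<in> ktuples n k"
    and card: "\<forall>q\<in>{1..k}. card (S q) \<le> D q"
    and x01: "\<forall>q\<in>{1..k}. \<forall>i\<in>{1..n}. x q i \<in> {0, 1}" and xi01: "\<forall>i\<in>{1..n}. xi i \<in> {0, 1}"
  shows "g S - (\<Sum>q\<in>{1..k}. \<Sum>i\<in>{1..n}.
      marginal g q i kempty * (if i \<in> S q then 1 else 0) * xi i * x q i) \<le> Qval n k D xi g x"
proof -
  define S' where "S' = (\<lambda>q. S q - {i. x q i * xi i = 1})"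
  have S'_feasible: "S' \<in> defender_feasible n k D xi x"
    unfolding S'_def using interdicted_removal_feasible[OF S card x01 xi01] .
  then have "S' \<in> ktuples n k" by (simp add: defender_feasible_def)
  then have "g S \<le> g S' + (\<Sum>q\<in>{1..k}. \<Sum>i\<in>S q - S' q. marginal g q i kempty)"
    by (rule k_submodular_le_plus_marginals[OF sub _ S]) (auto simp: S'_def)
  also have "(\<Sum>q\<in>{1..k}. \<Sum>i\<in>S q - S' q. marginal g q i kempty)
      = (\<Sum>q\<in>{1..k}. \<Sum>i\<in>{1..n}. marginal g q i kempty * (if i \<in> S q then 1 else 0) * xi i * x q i)"
  proof (rule sum.cong[OF refl])
    fix q assume q: "q \<in> {1..k}"
    have "S q \<subseteq> {1..n}" using S q unfolding ktuples_def by blast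
    then have removed: "S q - S' q = {i \<in> {1..n}. i \<in> S q \<and> x q i * xi i = 1}"
      unfolding S'_def by auto
    have "(\<Sum>i\<in>S q - S' q. marginal g q i kempty)
        = (\<Sum>i\<in>{1..n}. if i \<in> S q \<and> x q i * xi i = 1 then marginal g q i kempty else 0)"
      unfolding removed by (rule sum.inter_filter) simp
    also have "\<dots> = (\<Sum>i\<in>{1..n}. marginal g q i kempty * (if i \<in> S q then 1 else 0) * xi i * x q i)"
    proof (rule sum.cong[OF refl])
      fix i assume "i \<in> {1..n}"
      then have "x q i \<in> {0, 1}" "xi i \<in> {0, 1}" using x01 xi01 q by auto
      then show "(if i \<in> S q \<and> x q i * xi i = 1 then marginal g q i kempty else 0)
          = marginal g q i kempty * (if i \<in> S q then 1 else 0) * xi i * x q i" by auto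
    qed
    finally show "(\<Sum>i\<in>S q - S' q. marginal g q i kempty)
        = (\<Sum>i\<in>{1..n}. marginal g q i kempty * (if i \<in> S q then 1 else 0) * xi i * x q i)" .
  qed
  finally have "g S \<le> g S' + (\<Sum>q\<in>{1..k}. \<Sum>i\<in>{1..n}.
      marginal g q i kempty * (if i \<in> S q then 1 else 0) * xi i * x q i)" .
  moreover have "g S' \<le> Qval n k D xi g x"
    unfolding Qval_def using S'_feasible finite_defender_feasible by (intro Max_ge) auto
  ultimately show ?thesis by linarith
qed

lemma prob_dist_abs_expectation_le:
  fixes P :: "real ^ 'w::finite"
  assumes "prob_dist P"
  shows "\<bar>\<Sum>w\<in>UNIV. P $ w * g w\<bar> \<le> (\<Sum>w\<in>UNIV. \<bar>g w\<bar>)"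
proof -
  have nonneg: "0 \<le> P $ w" for w using assms by (simp add: prob_dist_def)
  have le1: "P $ w \<le> 1" for w
  proof -
    have "P $ w \<le> (\<Sum>w\<in>UNIV. P $ w)" using nonneg by (intro member_le_sum) auto
    thus ?thesis using assms by (simp add: prob_dist_def)
  qed
  have "\<bar>\<Sum>w\<in>UNIV. P $ w * g w\<bar> \<le> (\<Sum>w\<in>UNIV. \<bar>P $ w * g w\<bar>)" by (rule sum_abs)
  also have "\<dots> \<le> (\<Sum>w\<in>UNIV. \<bar>g w\<bar>)"
    using nonneg le1 by (intro sum_mono) (simp add: abs_mult mult_left_le_one_le)
  finally show ?thesis .
qed

lemma robust_expectation_bound:
  fixes \<PP> :: "(real ^ 'w::finite) set" and a b :: "'w \<Rightarrow> real"
    and c :: "'j \<Rightarrow> 'w \<Rightarrow> real" and y :: "'j \<Rightarrow> real"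
  assumes ne: "\<PP> \<noteq> {}" and dist: "\<forall>P\<in>\<PP>. prob_dist P" and y: "\<forall>j\<in>J. 0 \<le> y j"
    and bound: "\<And>w. a w - (\<Sum>j\<in>J. c j w * y j) \<le> b w"
  shows "(INF P\<in>\<PP>. \<Sum>w\<in>UNIV. P $ w * a w) - (\<Sum>j\<in>J. (SUP P\<in>\<PP>. \<Sum>w\<in>UNIV. P $ w * c j w) * y j)
    \<le> (INF P\<in>\<PP>. \<Sum>w\<in>UNIV. P $ w * b w)"
proof (rule cINF_greatest[OF ne])
  fix P assume P: "P \<in> \<PP>"
  have bdd_a: "bdd_below ((\<lambda>P. \<Sum>w\<in>UNIV. P $ w * a w) ` \<PP>)"
    using dist prob_dist_abs_expectation_le[of _ a]
    by (intro bdd_belowI2[where m = "- (\<Sum>w\<in>UNIV. \<bar>a w\<bar>)"]) fastforce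
  have bdd_c: "bdd_above ((\<lambda>P. \<Sum>w\<in>UNIV. P $ w * c j w) ` \<PP>)" for j
    using dist prob_dist_abs_expectation_le[of _ "c j"]
    by (intro bdd_aboveI2[where M = "\<Sum>w\<in>UNIV. \<bar>c j w\<bar>"]) fastforce
  have linear: "(\<Sum>w\<in>UNIV. P $ w * (\<Sum>j\<in>J. c j w * y j)) = (\<Sum>j\<in>J. (\<Sum>w\<in>UNIV. P $ w * c j w) * y j)"
    by (simp only: sum_distrib_left sum_distrib_right mult.assoc) (rule sum.swap)
  have "(INF P\<in>\<PP>. \<Sum>w\<in>UNIV. P $ w * a w) - (\<Sum>j\<in>J. (SUP P\<in>\<PP>. \<Sum>w\<in>UNIV. P $ w * c j w) * y j)
      \<le> (\<Sum>w\<in>UNIV. P $ w * a w) - (\<Sum>j\<in>J. (\<Sum>w\<in>UNIV. P $ w * c j w) * y j)"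
    using cINF_lower[OF bdd_a P] cSUP_upper[OF P bdd_c] y
    by (intro diff_mono sum_mono mult_right_mono) auto
  also have "\<dots> = (\<Sum>w\<in>UNIV. P $ w * (a w - (\<Sum>j\<in>J. c j w * y j)))"
    by (simp add: right_diff_distrib sum_subtractf linear)
  also have "\<dots> \<le> (\<Sum>w\<in>UNIV. P $ w * b w)"
    using dist P bound by (intro sum_mono mult_left_mono) (auto simp: prob_dist_def)
  finally show "(INF P\<in>\<PP>. \<Sum>w\<in>UNIV. P $ w * a w)
      - (\<Sum>j\<in>J. (SUP P\<in>\<PP>. \<Sum>w\<in>UNIV. P $ w * c j w) * y j) \<le> (\<Sum>w\<in>UNIV. P $ w * b w)" .
qed

theorem theorem4:
  fixes n k :: nat
    and A D :: "nat \<Rightarrow> nat"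
    and xi :: "'w::finite \<Rightarrow> nat \<Rightarrow> real"
    and f :: "'w \<Rightarrow> ktuple \<Rightarrow> real"
    and \<PP> :: "(real ^ 'w) set"
    and xhat x :: "nat \<Rightarrow> nat \<Rightarrow> real"
    and Shat :: "'w \<Rightarrow> ktuple"
  assumes "n \<ge> 1" and "k \<ge> 1"
    and xi01: "\<forall>w. \<forall>i\<in>{1..n}. xi w i \<in> {0, 1}"
    and fsub: "\<forall>w. k_submodular n k (f w)"
    and fmono: "\<forall>w. k_monotone n k (f w)"
    and Pne: "\<PP> \<noteq> {}" and Pcomp: "compact \<PP>"
    and Pdist: "\<forall>P\<in>\<PP>. prob_dist P"
    and xhat: "attacker_feasible n k A xhat"
    and Shat_opt: "\<forall>w. Shat w \<in> defender_feasible n k D (xi w) xhat \<and>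
                       f w (Shat w) = Qval n k D (xi w) (f w) xhat"
    and x: "attacker_feasible n k A x"
  shows "PhiR \<PP> n k D xi f x \<ge> PhiR \<PP> n k D xi f xhat -
     (\<Sum>q\<in>{1..k}. \<Sum>i\<in>{1..n}.
        (SUP P\<in>\<PP>. \<Sum>w\<in>UNIV. P $ w * marginal (f w) q i kempty
                      * (if i \<in> Shat w q then 1 else 0) * xi w i) * x q i)"
proof -
  define c where "c j w = marginal (f w) (fst j) (snd j) kempty
    * (if snd j \<in> Shat w (fst j) then 1 else 0) * xi w (snd j)" for j w
  have x01: "\<forall>q\<in>{1..k}. \<forall>i\<in>{1..n}. x q i \<in> {0, 1}"
    using x by (simp add: attacker_feasible_def)
  have scenario: "Qval n k D (xi w) (f w) xhat - (\<Sum>j\<in>{1..k} \<times> {1..n}. c j w * x (fst j) (snd j))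
      \<le> Qval n k D (xi w) (f w) x" for w
  proof -
    have "k_submodular n k (f w)" "\<forall>i\<in>{1..n}. xi w i \<in> {0, 1}"
      using fsub xi01 by blast+
    moreover have "Shat w \<in> ktuples n k" "\<forall>q\<in>{1..k}. card (Shat w q) \<le> D q"
      and opt: "f w (Shat w) = Qval n k D (xi w) (f w) xhat"
      using Shat_opt by (auto simp: defender_feasible_def)
    ultimately have "f w (Shat w) - (\<Sum>q\<in>{1..k}. \<Sum>i\<in>{1..n}. marginal (f w) q i kempty
        * (if i \<in> Shat w q then 1 else 0) * xi w i * x q i) \<le> Qval n k D (xi w) (f w) x"
      using x01 by (intro Qval_ge_minus_interdicted_marginals)
    then show ?thesis by (simp add: opt c_def sum.cartesian_product split_def)
  qed
  have "PhiR \<PP> n k D xi f xhat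
      - (\<Sum>j\<in>{1..k} \<times> {1..n}. (SUP P\<in>\<PP>. \<Sum>w\<in>UNIV. P $ w * c j w) * x (fst j) (snd j))
      \<le> PhiR \<PP> n k D xi f x"
    unfolding PhiR_def using x01 by (intro robust_expectation_bound[OF Pne Pdist _ scenario]) fastforce
  then show ?thesis by (simp add: c_def sum.cartesian_product split_def mult.assoc)
qed

end
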